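(* Let $X=\{x_0,x_1,\ldots,x_m\}$ and let $\mathbb{R}^m_{pi}\langle\langle X\rangle\rangle$ be the set of purely improper series in $\mathbb{R}^m\langle\langle X\rangle\rangle$. Then the set $\delta\sqcup\!\sqcup\,\mathbb{R}^m_{pi}\langle\langle X\rangle\rangle=\{\delta_d : d\in \mathbb{R}^m_{pi}\langle\langle X\rangle\rangle\}$ forms a group under the multiplicative composition product $\delta_c\circ\delta_d:=\delta_{d\,\sqcup\!\sqcup\,(c\,\tilde\circ\,\delta_d)}$, with identity element $\delta_{\mathbb{1}}$, where $\mathbb{1}=[1\,1\cdots 1]^t\in\mathbb{R}^m$.
   Context: $X$ is a finite alphabet of noncommuting letters, $X^\ast$ the free monoid of words (with empty word $\emptyset$), and $\mathbb{R}^\ell\langle\langle X\rangle\rangle$ the set of formal power series $c=\sum_{\eta\in X^\ast}(c,\eta)\eta$ with coefficients $(c,\eta)\in\mathbb{R}^\ell$; $c_i$ denotes the $i$-th component series. A series is proper if $(c,\emptyset)=0$; $c\in\mathbb{R}^\ell\langle\langle X\rangle\rangle$ is purely improper if $(c_i,\emptyset)\neq 0$ for every $i=1,\ldots,\ell$. All products of vector-valued series are taken componentwise. The shuffle product is the bilinear product on words defined by $(x_i\eta)\sqcup\!\sqcup(x_j\xi)=x_i(\eta\sqcup\!\sqcup x_j\xi)+x_j(x_i\eta\sqcup\!\sqcup\xi)$, $\eta\sqcup\!\sqcup\emptyset=\emptyset\sqcup\!\sqcup\eta=\eta$, extended to series. The multiplicative mixed composition product of $c\in\mathbb{R}^p\langle\langle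 X\rangle\rangle$ and $d\in\mathbb{R}^m\langle\langle X\rangle\rangle$ is $c\,\tilde\circ\,\delta_d=\sum_{\eta\in X^\ast}(c,\eta)\,\bar\phi_d(\eta)(\mathbf{1})$, where $\mathbf{1}=1\emptyset$ and $\bar\phi_d$ is the algebra homomorphism from words (under concatenation) to linear endomorphisms of $\mathbb{R}\langle\langle X\rangle\rangle$ (under composition) determined by $\bar\phi_d(x_0)(e)=x_0e$ and $\bar\phi_d(x_i)(e)=x_i(d_i\sqcup\!\sqcup e)$ for $i=1,\ldots,m$, with $\bar\phi_d(\emptyset)$ the identity. For $d\in\mathbb{R}^m\langle\langle X\rangle\rangle$, $\delta_d$ is a formal symbol (standing for $\delta\sqcup\!\sqcup d$, the generating series of the operator $u\mapsto u\cdot F_d[u]$, $F_d$ the Chen-Fliess series of $d$); $\delta_c=\delta_d$ iff $c=d$. *)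

theory Defs
  imports Complex_Main "HOL-Algebra.Group"
begin

text \<open>Letters x_0,...,x_m are encoded by the natural numbers 0..m; words are lists.
  A scalar series is a coefficient function on words; an R^m-valued series is a
  family of component series indexed by i (only i in {1..m} are meaningful).\<close>

type_synonym series = "nat list \<Rightarrow> real"
type_synonym vseries = "nat \<Rightarrow> series"

definition shuffle_prod :: "series \<Rightarrow> series \<Rightarrow> series" where
  "shuffle_prod c d = (\<lambda>w. \<Sum>S\<in>Pow {..<length w}.
      c (nths w S) * d (nths w ({..<length w} - S)))"

definition one_series :: series where
  "one_series = (\<lambda>w. if w = [] then 1 else 0)"

definition prepend :: "nat \<Rightarrow> series \<Rightarrow> series" where
  "prepend a e = (\<lambda>w. case w of [] \<Rightarrow> 0 | b # w' \<Rightarrow> (if b = a then e w' else 0))"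

fun phi :: "vseries \<Rightarrow> nat list \<Rightarrow> series \<Rightarrow> series" where
  "phi d [] e = e"
| "phi d (a # \<eta>) e =
     (if a = 0 then prepend 0 (phi d \<eta> e) else prepend a (shuffle_prod (d a) (phi d \<eta> e)))"

text \<open>Since phi_d(eta)(1) is
  supported on words of length at least length eta, the coefficient of w only
  involves the finitely many eta with length eta <= length w.\<close>
definition mixed_comp :: "nat \<Rightarrow> vseries \<Rightarrow> vseries \<Rightarrow> vseries" where
  "mixed_comp m c d = (\<lambda>j w. \<Sum>\<eta>\<in>{\<eta>. set \<eta> \<subseteq> {0..m} \<and> length \<eta> \<le> length w}.
      c j \<eta> * phi d \<eta> one_series w)"

definition wf_vseries :: "nat \<Rightarrow> vseries \<Rightarrow> bool" where
  "wf_vseries m c \<longleftrightarrow> (\<forall>i w. (i \<notin> {1..m} \<or> \<not> set w \<subseteq> {0..m}) \<longrightarrow> c i w = 0)"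

definition purely_improper :: "nat \<Rightarrow> vseries \<Rightarrow> bool" where
  "purely_improper m c \<longleftrightarrow> (\<forall>i\<in>{1..m}. c i [] \<noteq> 0)"

definition pi_series :: "nat \<Rightarrow> vseries set" where
  "pi_series m = {c. wf_vseries m c \<and> purely_improper m c}"

text \<open>delta_c o delta_d = delta_(d shuffle (c ~o delta_d)), identifying delta_d with d.\<close>
definition mult_comp :: "nat \<Rightarrow> vseries \<Rightarrow> vseries \<Rightarrow> vseries" where
  "mult_comp m c d = (\<lambda>i. shuffle_prod (d i) (mixed_comp m c d i))"

definition one_vseries :: "nat \<Rightarrow> vseries" where
  "one_vseries m = (\<lambda>i. if i \<in> {1..m} then one_series else (\<lambda>_. 0))"

definition delta_group :: "nat \<Rightarrow> vseries monoid" where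
  "delta_group m = \<lparr>carrier = pi_series m, mult = mult_comp m, one = one_vseries m\<rparr>"

end

theory Submission
  imports Defs
begin

(* Write Phi_d s (scalar_mixed_comp m d s) for the scalar series s ~o delta_d, so that the
  product is (delta_c o delta_d)_i = d_i shuffle Phi_d c_i. Removing a first letter x_b gives the
  recursion x_b^-1 (Phi_d s) = d_b shuffle Phi_d (x_b^-1 s) with d_0 = 1, and x_b^-1 is a
  derivation of the shuffle product. By induction on word length, Phi_d is therefore a shuffle
  homomorphism and Phi_c o Phi_b = Phi_(b o c), which yields associativity; delta_1 is a unit
  since Phi_1 is the identity and Phi_d 1 = 1. For inverses: the coefficient of w in Phi_d s is
  s w times the product of the constant terms of d_0 = 1, d_1, ..., d_m along w, plus terms in
  the coefficients of s at shorter words. Pure impropriety makes this triangular system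
  solvable, so Phi_d is onto, and purely improper series are invertible under shuffle; hence
  x_i shuffle Phi_x y_i = 1 can be solved for y. *)

notation shuffle_prod (infixl "\<bowtie>" 70)

definition left_shift :: "nat \<Rightarrow> series \<Rightarrow> series" where
  "left_shift b f = (\<lambda>w. f (b # w))"

definition series_over :: "nat set \<Rightarrow> series \<Rightarrow> bool" where
  "series_over A f \<longleftrightarrow> (\<forall>w. \<not> set w \<subseteq> A \<longrightarrow> f w = 0)"

lemma length_local_fixpoint:
  fixes F :: "('a list \<Rightarrow> 'b) \<Rightarrow> 'a list \<Rightarrow> 'b"
  assumes "\<And>g g' w. (\<And>u. length u < length w \<Longrightarrow> g u = g' u) \<Longrightarrow> F g w = F g' w"
  shows "\<exists>g. g = F g"
proof
  have "adm_wf (measure length) F"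
    unfolding adm_wf_def in_measure by (blast intro: assms)
  then show "wfrec (measure length) F = F (wfrec (measure length) F)"
    by (rule wfrec_fixpoint[OF wf_measure])
qed

lemma length_nths_le: "length (nths xs I) \<le> length xs"
  by (induction xs arbitrary: I) (simp_all add: nths_Cons le_SucI)

lemma length_nths_Diff_less:
  assumes "S \<subseteq> {..<length w}" "S \<noteq> {}"
  shows "length (nths w ({..<length w} - S)) < length w"
proof -
  have "{i. i < length w \<and> i \<in> {..<length w} - S} = {..<length w} - S" by auto
  then have "length (nths w ({..<length w} - S)) = card ({..<length w} - S)"
    by (simp add: length_nths)
  also have "\<dots> < card {..<length w}"
    by (rule psubset_card_mono) (use assms in auto)
  finally show ?thesis by simp
qed

lemma Pow_lessThan_Suc_shift:
  "Pow {..<Suc n} = (\<lambda>T. Suc ` T) ` Pow {..<n} \<union> (\<lambda>T. insert 0 (Suc ` T)) ` Pow {..<n}"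
  by (simp add: lessThan_Suc_eq_insert_0 Pow_insert image_Pow_surj[OF refl, symmetric] image_image)

lemma nths_Cons_Suc_image [simp]: "nths (b # w) (Suc ` T) = nths w T"
  by (simp add: nths_Cons inj_image_mem_iff)

lemma nths_Cons_insert_0_Suc_image [simp]: "nths (b # w) (insert 0 (Suc ` T)) = b # nths w T"
  by (simp add: nths_Cons inj_image_mem_iff)

lemma lessThan_Suc_Diff_Suc_image: "{..<Suc n} - Suc ` T = insert 0 (Suc ` ({..<n} - T))"
  by (auto simp: lessThan_Suc_eq_insert_0 image_set_diff)

lemma lessThan_Suc_Diff_insert_0_Suc_image:
  "{..<Suc n} - insert 0 (Suc ` T) = Suc ` ({..<n} - T)"
  by (auto simp: lessThan_Suc_eq_insert_0 image_set_diff)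

subsection \<open>The shuffle algebra\<close>

lemma shuffle_prod_Nil [simp]: "(c \<bowtie> d) [] = c [] * d []"
  by (simp add: shuffle_prod_def)

lemma shuffle_prod_Cons:
  "(c \<bowtie> d) (b # w) = (left_shift b c \<bowtie> d) w + (c \<bowtie> left_shift b d) w"
proof -
  let ?n = "length w"
  let ?f = "\<lambda>S. c (nths (b # w) S) * d (nths (b # w) ({..<Suc ?n} - S))"
  have inj_right: "inj_on (\<lambda>T. Suc ` T) (Pow {..<?n})"
    by (simp add: inj_on_def inj_image_eq_iff)
  have inj_left: "inj_on (\<lambda>T. insert 0 (Suc ` T)) (Pow {..<?n})"
  proof (rule inj_onI)
    fix x y assume "insert 0 (Suc ` x) = insert 0 (Suc ` y)"
    then have "Suc ` x = Suc ` y" by (metis Diff_insert_absorb image_iff nat.distinct(1))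
    then show "x = y" by (simp add: inj_image_eq_iff)
  qed
  have "(c \<bowtie> d) (b # w) = sum ?f (Pow {..<Suc ?n})" by (simp add: shuffle_prod_def)
  also have "\<dots> = sum ?f ((\<lambda>T. Suc ` T) ` Pow {..<?n})
      + sum ?f ((\<lambda>T. insert 0 (Suc ` T)) ` Pow {..<?n})"
    by (simp only: Pow_lessThan_Suc_shift) (rule sum.union_disjoint, auto)
  also have "sum ?f ((\<lambda>T. Suc ` T) ` Pow {..<?n}) = (c \<bowtie> left_shift b d) w"
    by (simp add: sum.reindex[OF inj_right] shuffle_prod_def lessThan_Suc_Diff_Suc_image
        left_shift_def)
  also have "sum ?f ((\<lambda>T. insert 0 (Suc ` T)) ` Pow {..<?n}) = (left_shift b c \<bowtie> d) w"
    by (simp add: sum.reindex[OF inj_left] shuffle_prod_def lessThan_Suc_Diff_insert_0_Suc_image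
        left_shift_def)
  finally show ?thesis by simp
qed

lemma left_shift_one_series [simp]: "left_shift b one_series = (\<lambda>v. 0)"
  by (simp add: left_shift_def one_series_def)

lemma left_shift_shuffle_prod:
  "left_shift b (c \<bowtie> d) = (\<lambda>v. (left_shift b c \<bowtie> d) v + (c \<bowtie> left_shift b d) v)"
  by (rule ext) (simp add: left_shift_def shuffle_prod_Cons)

lemma shuffle_prod_zero_left [simp]: "(\<lambda>v. 0) \<bowtie> d = (\<lambda>v. 0)"
  by (rule ext) (simp add: shuffle_prod_def)

lemma shuffle_prod_zero_right [simp]: "c \<bowtie> (\<lambda>v. 0) = (\<lambda>v. 0)"
  by (rule ext) (simp add: shuffle_prod_def)

lemma shuffle_prod_add_left: "((\<lambda>v. f v + g v) \<bowtie> e) w = (f \<bowtie> e) w + (g \<bowtie> e) w"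
  by (simp add: shuffle_prod_def distrib_right sum.distrib)

lemma shuffle_prod_add_right: "(e \<bowtie> (\<lambda>v. f v + g v)) w = (e \<bowtie> f) w + (e \<bowtie> g) w"
  by (simp add: shuffle_prod_def distrib_left sum.distrib)

lemma shuffle_prod_sum_right:
  "(f \<bowtie> (\<lambda>u. \<Sum>\<eta>\<in>A. a \<eta> * g \<eta> u)) w = (\<Sum>\<eta>\<in>A. a \<eta> * (f \<bowtie> g \<eta>) w)"
  unfolding shuffle_prod_def
  by (simp add: sum_distrib_left sum_distrib_right mult_ac sum.swap[of _ A])

lemma shuffle_prod_commute: "c \<bowtie> d = d \<bowtie> c"
proof
  show "(c \<bowtie> d) w = (d \<bowtie> c) w" for w
    by (induction w arbitrary: c d) (simp_all add: shuffle_prod_Cons)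
qed

lemma shuffle_prod_assoc: "c \<bowtie> d \<bowtie> e = c \<bowtie> (d \<bowtie> e)"
proof
  show "(c \<bowtie> d \<bowtie> e) w = (c \<bowtie> (d \<bowtie> e)) w" for w
  proof (induction w arbitrary: c d e)
    case (Cons b w)
    then show ?case
      by (simp add: shuffle_prod_Cons left_shift_shuffle_prod shuffle_prod_add_left
          shuffle_prod_add_right)
  qed simp
qed

lemma shuffle_prod_one_left [simp]: "one_series \<bowtie> c = c"
proof
  show "(one_series \<bowtie> c) w = c w" for w
    by (induction w arbitrary: c) (simp_all add: shuffle_prod_Cons one_series_def left_shift_def)
qed

lemma shuffle_prod_one_right [simp]: "c \<bowtie> one_series = c"
  by (subst shuffle_prod_commute) simp

lemma shuffle_prod_cong_short:
  "(\<And>u. length u \<le> length w \<Longrightarrow> g u = g' u) \<Longrightarrow> (f \<bowtie> g) w = (f \<bowtie> g') w"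
  unfolding shuffle_prod_def by (rule sum.cong) (auto intro: length_nths_le)

lemma shuffle_prod_vanish_short: "(\<And>u. length u \<le> length w \<Longrightarrow> g u = 0) \<Longrightarrow> (f \<bowtie> g) w = 0"
  using shuffle_prod_cong_short[of w g "\<lambda>_. 0" f] by simp

lemma shuffle_prod_lowest_order:
  "(\<And>u. length u < length w \<Longrightarrow> g u = 0) \<Longrightarrow> (f \<bowtie> g) w = f [] * g w"
proof (induction w arbitrary: f g)
  case (Cons b w)
  have "(left_shift b f \<bowtie> g) w = 0"
    by (rule shuffle_prod_vanish_short) (use Cons.prems in auto)
  moreover have "(f \<bowtie> left_shift b g) w = f [] * left_shift b g w"
    by (rule Cons.IH) (use Cons.prems in \<open>auto simp: left_shift_def\<close>)
  ultimately show ?case by (simp add: shuffle_prod_Cons left_shift_def)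
qed simp

lemma series_over_zero [simp]: "series_over A (\<lambda>_. 0)"
  by (simp add: series_over_def)

lemma series_over_one_series [simp]: "series_over A one_series"
  by (simp add: series_over_def one_series_def)

lemma series_over_left_shift: "series_over A f \<Longrightarrow> series_over A (left_shift b f)"
  by (simp add: series_over_def left_shift_def)

lemma left_shift_outside: "series_over A f \<Longrightarrow> b \<notin> A \<Longrightarrow> left_shift b f = (\<lambda>_. 0)"
  by (auto simp: series_over_def left_shift_def)

lemma series_over_prepend: "a \<in> A \<Longrightarrow> series_over A e \<Longrightarrow> series_over A (prepend a e)"
  by (auto simp: series_over_def prepend_def split: list.split)

lemma series_over_shuffle_prod:
  assumes "series_over A f" "series_over A g"
  shows "series_over A (f \<bowtie> g)"
  unfolding series_over_def
proof (intro allI impI)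
  fix w assume "\<not> set w \<subseteq> A"
  then show "(f \<bowtie> g) w = 0"
    using assms
  proof (induction w arbitrary: f g)
    case (Cons b w)
    show ?case
    proof (cases "b \<in> A")
      case True
      with Cons show ?thesis by (simp add: shuffle_prod_Cons series_over_left_shift)
    next
      case False
      with Cons.prems show ?thesis by (simp add: shuffle_prod_Cons left_shift_outside)
    qed
  qed simp
qed

lemma shuffle_prod_split_empty:
  "(f \<bowtie> t) w = f [] * t w + (\<Sum>S\<in>Pow {..<length w} - {{}}.
      f (nths w S) * t (nths w ({..<length w} - S)))"
  unfolding shuffle_prod_def by (subst sum.remove[of _ "{}"]) auto

lemma shuffle_prod_inverse_exists:
  assumes f0: "f [] \<noteq> 0" and f: "series_over A f"
  shows "\<exists>t. f \<bowtie> t = one_series \<and> series_over A t"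
proof -
  define rest where "rest t w = (\<Sum>S\<in>Pow {..<length w} - {{}}.
      f (nths w S) * t (nths w ({..<length w} - S)))" for t w
  define F where "F t w = (if w = [] then 1 / f [] else if \<not> set w \<subseteq> A then 0
      else - rest t w / f [])" for t w
  have "\<exists>t. t = F t"
  proof (rule length_local_fixpoint)
    fix g g' :: series and w :: "nat list"
    assume "\<And>u. length u < length w \<Longrightarrow> g u = g' u"
    then have "rest g w = rest g' w"
      unfolding rest_def by (intro sum.cong) (auto simp: length_nths_Diff_less)
    then show "F g w = F g' w" by (simp add: F_def)
  qed
  then obtain t where "t = F t" by blast
  then have t: "t w = F t w" for w by simp
  have t_over: "series_over A t"
    unfolding series_over_def using t by (simp add: F_def)
  have "f \<bowtie> t = one_series"
  proof
    fix w
    show "(f \<bowtie> t) w = one_series w"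
    proof (cases "w = []")
      case True
      have "t [] = 1 / f []" using t[of "[]"] by (simp add: F_def)
      with True f0 show ?thesis by (simp add: one_series_def)
    next
      case False
      have "(f \<bowtie> t) w = 0"
      proof (cases "set w \<subseteq> A")
        case True
        with False f0 have "f [] * t w = - rest t w" using t[of w] by (simp add: F_def)
        then show ?thesis by (simp add: shuffle_prod_split_empty rest_def)
      next
        case outside: False
        show ?thesis
          using series_over_shuffle_prod[OF f t_over] outside by (simp add: series_over_def)
      qed
      with False show ?thesis by (simp add: one_series_def)
    qed
  qed
  with t_over show ?thesis by auto
qed

subsection \<open>Composition with \<open>\<delta>\<^sub>d\<close>\<close>

(* The convention d_0 = 1 lets phi_d(x_a) e = x_a (d_a shuffle e) cover the drift letter x_0 too. *)
definition with_drift :: "vseries \<Rightarrow> vseries" where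
  "with_drift d a = (if a = 0 then one_series else d a)"

definition words_upto :: "nat \<Rightarrow> nat \<Rightarrow> nat list set" where
  "words_upto m n = {\<eta>. set \<eta> \<subseteq> {0..m} \<and> length \<eta> \<le> n}"

definition scalar_mixed_comp :: "nat \<Rightarrow> vseries \<Rightarrow> series \<Rightarrow> series" where
  "scalar_mixed_comp m d s =
     (\<lambda>w. \<Sum>\<eta>\<in>words_upto m (length w). s \<eta> * phi d \<eta> one_series w)"

lemma finite_words_upto [simp]: "finite (words_upto m n)"
  unfolding words_upto_def by (rule finite_lists_length_le) simp

lemma mixed_comp_eq_scalar: "mixed_comp m c d j = scalar_mixed_comp m d (c j)"
  by (simp add: mixed_comp_def scalar_mixed_comp_def words_upto_def)

lemma mult_comp_eq_scalar: "mult_comp m c d i = d i \<bowtie> scalar_mixed_comp m d (c i)"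
  by (simp add: mult_comp_def mixed_comp_eq_scalar)

lemma phi_Cons: "phi d (a # \<eta>) e = prepend a (with_drift d a \<bowtie> phi d \<eta> e)"
  by (simp add: with_drift_def)

declare phi.simps(2) [simp del]

lemma phi_Cons_Cons:
  "phi d (a # \<eta>) e (b # w) = (if a = b then (with_drift d a \<bowtie> phi d \<eta> e) w else 0)"
  by (simp add: phi_Cons prepend_def)

lemma phi_Cons_Nil: "phi d (a # \<eta>) e [] = 0"
  by (simp add: phi_Cons prepend_def)

lemma phi_vanish_short: "length w < length \<eta> \<Longrightarrow> phi d \<eta> e w = 0"
proof (induction \<eta> arbitrary: w)
  case (Cons a \<eta>)
  show ?case
  proof (cases w)
    case Nil
    then show ?thesis by (simp add: phi_Cons_Nil)
  next
    case (Cons b w')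
    have "(with_drift d a \<bowtie> phi d \<eta> e) w' = 0"
      by (rule shuffle_prod_vanish_short) (use Cons Cons.prems in \<open>auto intro: Cons.IH\<close>)
    with Cons show ?thesis by (auto simp add: phi_Cons_Cons)
  qed
qed simp

lemma phi_one_series_other_head:
  "\<forall>x. \<eta> \<noteq> b # x \<Longrightarrow> phi d \<eta> one_series (b # w) = 0"
  by (cases \<eta>) (auto simp: phi_Cons_Cons one_series_def)

lemma scalar_mixed_comp_eq_sum:
  assumes "length u \<le> N"
  shows "scalar_mixed_comp m d s u = (\<Sum>\<eta>\<in>words_upto m N. s \<eta> * phi d \<eta> one_series u)"
  unfolding scalar_mixed_comp_def
proof (rule sum.mono_neutral_left)
  show "words_upto m (length u) \<subseteq> words_upto m N"
    using assms by (auto simp: words_upto_def)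
  show "\<forall>\<eta>\<in>words_upto m N - words_upto m (length u). s \<eta> * phi d \<eta> one_series u = 0"
    by (auto simp: words_upto_def) (metis not_le phi_vanish_short)
qed simp

lemma scalar_mixed_comp_Nil [simp]: "scalar_mixed_comp m d s [] = s []"
proof -
  have "words_upto m 0 = {[]}" by (auto simp: words_upto_def)
  then show ?thesis by (simp add: scalar_mixed_comp_def one_series_def)
qed

lemma scalar_mixed_comp_Cons:
  "scalar_mixed_comp m d s (b # w) =
     (if b \<le> m then (with_drift d b \<bowtie> scalar_mixed_comp m d (left_shift b s)) w else 0)"
proof -
  let ?g = "\<lambda>\<eta>. s \<eta> * phi d \<eta> one_series (b # w)"
  show ?thesis
  proof (cases "b \<le> m")
    case True
    let ?n = "length w"
    have "scalar_mixed_comp m d s (b # w) = sum ?g (words_upto m (Suc ?n))"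
      by (simp add: scalar_mixed_comp_def)
    also have "\<dots> = sum ?g ((#) b ` words_upto m ?n)"
    proof (rule sum.mono_neutral_right)
      show "(#) b ` words_upto m ?n \<subseteq> words_upto m (Suc ?n)"
        using True by (auto simp: words_upto_def)
      show "\<forall>\<eta>\<in>words_upto m (Suc ?n) - (#) b ` words_upto m ?n. ?g \<eta> = 0"
      proof
        fix \<eta> assume "\<eta> \<in> words_upto m (Suc ?n) - (#) b ` words_upto m ?n"
        then have "\<forall>x. \<eta> \<noteq> b # x" by (auto simp: words_upto_def)
        then show "?g \<eta> = 0" by (simp add: phi_one_series_other_head)
      qed
    qed simp
    also have "\<dots> = (\<Sum>\<eta>\<in>words_upto m ?n. s (b # \<eta>) * (with_drift d b \<bowtie> phi d \<eta> one_series) w)"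
      by (simp add: sum.reindex phi_Cons_Cons)
    also have "\<dots> = (with_drift d b \<bowtie>
        (\<lambda>u. \<Sum>\<eta>\<in>words_upto m ?n. left_shift b s \<eta> * phi d \<eta> one_series u)) w"
      by (simp add: shuffle_prod_sum_right left_shift_def)
    also have "\<dots> = (with_drift d b \<bowtie> scalar_mixed_comp m d (left_shift b s)) w"
      by (rule shuffle_prod_cong_short) (simp add: scalar_mixed_comp_eq_sum)
    finally show ?thesis using True by simp
  next
    case False
    have "sum ?g (words_upto m (length (b # w))) = 0"
    proof (rule sum.neutral, rule ballI)
      fix \<eta> assume "\<eta> \<in> words_upto m (length (b # w))"
      with False have "\<forall>x. \<eta> \<noteq> b # x" by (auto simp: words_upto_def)
      then show "?g \<eta> = 0" by (simp add: phi_one_series_other_head)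
    qed
    with False show ?thesis by (simp add: scalar_mixed_comp_def)
  qed
qed

lemma left_shift_scalar_mixed_comp:
  "left_shift b (scalar_mixed_comp m d s) =
     (if b \<le> m then with_drift d b \<bowtie> scalar_mixed_comp m d (left_shift b s) else (\<lambda>_. 0))"
  by (rule ext) (simp add: left_shift_def scalar_mixed_comp_Cons)

lemma scalar_mixed_comp_add:
  "scalar_mixed_comp m d (\<lambda>v. s v + t v) = (\<lambda>w. scalar_mixed_comp m d s w + scalar_mixed_comp m d t w)"
  by (rule ext) (simp add: scalar_mixed_comp_def distrib_right sum.distrib)

lemma scalar_mixed_comp_zero [simp]: "scalar_mixed_comp m d (\<lambda>v. 0) = (\<lambda>v. 0)"
  by (rule ext) (simp add: scalar_mixed_comp_def)

lemma scalar_mixed_comp_one_series [simp]: "scalar_mixed_comp m d one_series = one_series"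
proof
  show "scalar_mixed_comp m d one_series w = one_series w" for w
    by (cases w) (simp_all add: scalar_mixed_comp_Cons one_series_def[symmetric],
        simp add: one_series_def)
qed

lemma scalar_mixed_comp_shuffle_prod:
  "scalar_mixed_comp m d (s \<bowtie> t) = scalar_mixed_comp m d s \<bowtie> scalar_mixed_comp m d t"
proof
  show "scalar_mixed_comp m d (s \<bowtie> t) w = (scalar_mixed_comp m d s \<bowtie> scalar_mixed_comp m d t) w" for w
  proof (induction "length w" arbitrary: w s t rule: less_induct)
    case less
    show ?case
    proof (cases w)
      case (Cons b w')
      let ?\<Phi> = "scalar_mixed_comp m d" and ?D = "with_drift d b"
      have IH: "?\<Phi> (s \<bowtie> t) u = (?\<Phi> s \<bowtie> ?\<Phi> t) u" if "length u \<le> length w'" for u s t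
        using less Cons that by auto
      show ?thesis
      proof (cases "b \<le> m")
        case True
        have "?\<Phi> (s \<bowtie> t) w = (?D \<bowtie> ?\<Phi> (left_shift b (s \<bowtie> t))) w'"
          using Cons True by (simp add: scalar_mixed_comp_Cons)
        also have "\<dots> = (?D \<bowtie> (\<lambda>v. (?\<Phi> (left_shift b s) \<bowtie> ?\<Phi> t) v
            + (?\<Phi> s \<bowtie> ?\<Phi> (left_shift b t)) v)) w'"
          unfolding left_shift_shuffle_prod scalar_mixed_comp_add
          by (rule shuffle_prod_cong_short) (simp add: IH)
        also have "\<dots> = (?D \<bowtie> ?\<Phi> (left_shift b s) \<bowtie> ?\<Phi> t) w'
            + (?\<Phi> s \<bowtie> (?D \<bowtie> ?\<Phi> (left_shift b t))) w'"
          by (simp add: shuffle_prod_add_right shuffle_prod_assoc)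
            (metis shuffle_prod_assoc shuffle_prod_commute)
        also have "\<dots> = (?\<Phi> s \<bowtie> ?\<Phi> t) w"
          using Cons True by (simp add: shuffle_prod_Cons left_shift_scalar_mixed_comp)
        finally show ?thesis .
      next
        case False
        with Cons show ?thesis
          by (simp add: scalar_mixed_comp_Cons shuffle_prod_Cons left_shift_scalar_mixed_comp)
      qed
    qed simp
  qed
qed

lemma with_drift_mult_comp:
  "with_drift (mult_comp m b c) a = with_drift c a \<bowtie> scalar_mixed_comp m c (with_drift b a)"
  by (simp add: with_drift_def mult_comp_eq_scalar)

lemma scalar_mixed_comp_mult_comp:
  "scalar_mixed_comp m c (scalar_mixed_comp m b s) = scalar_mixed_comp m (mult_comp m b c) s"
proof
  show "scalar_mixed_comp m c (scalar_mixed_comp m b s) w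
      = scalar_mixed_comp m (mult_comp m b c) s w" for w
  proof (induction "length w" arbitrary: w s rule: less_induct)
    case less
    show ?case
    proof (cases w)
      case (Cons a w')
      have IH: "scalar_mixed_comp m c (scalar_mixed_comp m b s) u
          = scalar_mixed_comp m (mult_comp m b c) s u" if "length u \<le> length w'" for u s
        using less Cons that by auto
      show ?thesis
      proof (cases "a \<le> m")
        case True
        have "scalar_mixed_comp m c (scalar_mixed_comp m b s) w
            = (with_drift c a \<bowtie> (scalar_mixed_comp m c (with_drift b a)
               \<bowtie> scalar_mixed_comp m c (scalar_mixed_comp m b (left_shift a s)))) w'"
          using Cons True
          by (simp add: scalar_mixed_comp_Cons left_shift_scalar_mixed_comp
              scalar_mixed_comp_shuffle_prod)
        also have "\<dots> = (with_drift c a \<bowtie> (scalar_mixed_comp m c (with_drift b a)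
               \<bowtie> scalar_mixed_comp m (mult_comp m b c) (left_shift a s))) w'"
          by (rule shuffle_prod_cong_short, rule shuffle_prod_cong_short) (simp add: IH)
        also have "\<dots> = scalar_mixed_comp m (mult_comp m b c) s w"
          using Cons True
          by (simp add: scalar_mixed_comp_Cons with_drift_mult_comp shuffle_prod_assoc)
        finally show ?thesis .
      next
        case False
        with Cons show ?thesis by (simp add: scalar_mixed_comp_Cons)
      qed
    qed simp
  qed
qed

lemma mult_comp_assoc: "mult_comp m (mult_comp m x y) z = mult_comp m x (mult_comp m y z)"
  by (rule ext)
    (simp add: mult_comp_eq_scalar scalar_mixed_comp_shuffle_prod shuffle_prod_assoc
      scalar_mixed_comp_mult_comp)

lemma series_over_with_drift: "wf_vseries m d \<Longrightarrow> series_over {0..m} (with_drift d a)"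
  by (auto simp: with_drift_def wf_vseries_def series_over_def one_series_def)

lemma series_over_phi:
  assumes "wf_vseries m d" "series_over {0..m} e"
  shows "set \<eta> \<subseteq> {0..m} \<Longrightarrow> series_over {0..m} (phi d \<eta> e)"
  by (induction \<eta>)
    (simp_all add: assms phi_Cons series_over_prepend series_over_shuffle_prod
      series_over_with_drift)

lemma series_over_scalar_mixed_comp:
  assumes "wf_vseries m d"
  shows "series_over {0..m} (scalar_mixed_comp m d s)"
  unfolding series_over_def
proof (intro allI impI)
  fix w assume "\<not> set w \<subseteq> {0..m}"
  then have "phi d \<eta> one_series w = 0" if "\<eta> \<in> words_upto m (length w)" for \<eta>
    using series_over_phi[OF assms series_over_one_series] that
    by (simp add: series_over_def words_upto_def)
  then show "scalar_mixed_comp m d s w = 0"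
    by (simp add: scalar_mixed_comp_def)
qed

lemma wf_vseries_iff:
  "wf_vseries m c \<longleftrightarrow> (\<forall>i. i \<notin> {1..m} \<longrightarrow> c i = (\<lambda>_. 0)) \<and> (\<forall>i. series_over {0..m} (c i))"
  by (auto simp: wf_vseries_def series_over_def)

lemma vseries_eqI:
  assumes "wf_vseries m x" "wf_vseries m y" "\<And>i. i \<in> {1..m} \<Longrightarrow> x i = y i"
  shows "x = y"
proof
  show "x i = y i" for i
    using assms by (cases "i \<in> {1..m}") (simp_all add: wf_vseries_iff)
qed

lemma wf_mult_comp: "wf_vseries m y \<Longrightarrow> wf_vseries m (mult_comp m x y)"
  by (simp add: wf_vseries_iff mult_comp_eq_scalar series_over_shuffle_prod
      series_over_scalar_mixed_comp)

lemma purely_improper_mult_comp: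
  "purely_improper m x \<Longrightarrow> purely_improper m y \<Longrightarrow> purely_improper m (mult_comp m x y)"
  by (simp add: purely_improper_def mult_comp_eq_scalar)

lemma mult_comp_closed: "x \<in> pi_series m \<Longrightarrow> y \<in> pi_series m \<Longrightarrow> mult_comp m x y \<in> pi_series m"
  by (simp add: pi_series_def wf_mult_comp purely_improper_mult_comp)

lemma one_vseries_apply: "i \<in> {1..m} \<Longrightarrow> one_vseries m i = one_series"
  by (simp add: one_vseries_def)

lemma wf_one_vseries: "wf_vseries m (one_vseries m)"
  by (simp add: wf_vseries_def one_vseries_def one_series_def)

lemma one_vseries_pi_series: "one_vseries m \<in> pi_series m"
  by (simp add: pi_series_def wf_one_vseries purely_improper_def one_vseries_apply one_series_def)

lemma mult_comp_one_left:
  assumes "wf_vseries m x"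
  shows "mult_comp m (one_vseries m) x = x"
proof (rule vseries_eqI)
  show "wf_vseries m (mult_comp m (one_vseries m) x)"
    using assms by (rule wf_mult_comp)
  fix i assume "i \<in> {1..m}"
  then show "mult_comp m (one_vseries m) x i = x i"
    by (simp only: mult_comp_eq_scalar one_vseries_apply scalar_mixed_comp_one_series
        shuffle_prod_one_right)
qed fact

lemma scalar_mixed_comp_one_vseries:
  assumes "series_over {0..m} s"
  shows "scalar_mixed_comp m (one_vseries m) s = s"
proof
  have with_drift_one: "b \<le> m \<Longrightarrow> with_drift (one_vseries m) b = one_series" for b
    by (simp add: with_drift_def one_vseries_apply)
  have "scalar_mixed_comp m (one_vseries m) s w = (if set w \<subseteq> {0..m} then s w else 0)" for s w
  proof (induction w arbitrary: s)
    case (Cons b w)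
    then show ?case by (simp add: scalar_mixed_comp_Cons with_drift_one left_shift_def)
  qed simp
  with assms show "scalar_mixed_comp m (one_vseries m) s w = s w" for w
    by (simp add: series_over_def)
qed

lemma mult_comp_one_right:
  assumes "wf_vseries m x"
  shows "mult_comp m x (one_vseries m) = x"
proof (rule vseries_eqI)
  show "wf_vseries m (mult_comp m x (one_vseries m))"
    by (simp add: wf_mult_comp wf_one_vseries)
  fix i assume "i \<in> {1..m}"
  moreover have "series_over {0..m} (x i)"
    using assms by (simp add: wf_vseries_iff)
  ultimately show "mult_comp m x (one_vseries m) i = x i"
    by (simp only: mult_comp_eq_scalar one_vseries_apply scalar_mixed_comp_one_vseries
        shuffle_prod_one_left)
qed fact

subsection \<open>Inverses\<close>

definition diag_coeff :: "vseries \<Rightarrow> nat list \<Rightarrow> real" where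
  "diag_coeff d w = prod_list (map (\<lambda>a. with_drift d a []) w)"

definition shorter_words :: "nat \<Rightarrow> nat list \<Rightarrow> nat list set" where
  "shorter_words m w = {\<eta>. set \<eta> \<subseteq> {0..m} \<and> length \<eta> < length w}"

lemma phi_same_length:
  "length \<eta> = length w \<Longrightarrow> phi d \<eta> one_series w = (if \<eta> = w then diag_coeff d w else 0)"
proof (induction \<eta> arbitrary: w)
  case Nil
  then show ?case by (simp add: one_series_def diag_coeff_def)
next
  case (Cons a \<eta>)
  then obtain b w' where w: "w = b # w'" by (cases w) auto
  have "(with_drift d a \<bowtie> phi d \<eta> one_series) w' = with_drift d a [] * phi d \<eta> one_series w'"
    by (rule shuffle_prod_lowest_order) (use Cons.prems w in \<open>auto intro: phi_vanish_short\<close>)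
  with Cons w show ?case by (auto simp: phi_Cons_Cons diag_coeff_def)
qed

lemma diag_coeff_nonzero: "purely_improper m d \<Longrightarrow> set w \<subseteq> {0..m} \<Longrightarrow> diag_coeff d w \<noteq> 0"
  by (induction w)
    (auto simp: diag_coeff_def with_drift_def purely_improper_def one_series_def)

lemma scalar_mixed_comp_triangular:
  "scalar_mixed_comp m d s w = (if set w \<subseteq> {0..m} then s w * diag_coeff d w else 0)
     + (\<Sum>\<eta>\<in>shorter_words m w. s \<eta> * phi d \<eta> one_series w)"
proof -
  let ?C = "{\<eta>. set \<eta> \<subseteq> {0..m} \<and> length \<eta> = length w}"
  let ?g = "\<lambda>\<eta>. s \<eta> * phi d \<eta> one_series w"
  have fin: "finite ?C" "finite (shorter_words m w)"
    by (rule finite_subset[OF _ finite_words_upto[of m "length w"]];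
        auto simp: words_upto_def shorter_words_def)+
  have "words_upto m (length w) = shorter_words m w \<union> ?C"
    by (auto simp: words_upto_def shorter_words_def)
  moreover have "shorter_words m w \<inter> ?C = {}" by (auto simp: shorter_words_def)
  ultimately have "scalar_mixed_comp m d s w = sum ?g (shorter_words m w) + sum ?g ?C"
    unfolding scalar_mixed_comp_def by (simp only: sum.union_disjoint[OF fin(2) fin(1)])
  also have "sum ?g ?C = (\<Sum>\<eta>\<in>?C. if \<eta> = w then s w * diag_coeff d w else 0)"
    by (rule sum.cong) (auto simp: phi_same_length)
  also have "\<dots> = (if set w \<subseteq> {0..m} then s w * diag_coeff d w else 0)"
    using fin(1) by (simp add: sum.delta')
  finally show ?thesis by simp
qed

lemma scalar_mixed_comp_surj:
  assumes d: "d \<in> pi_series m" and t: "series_over {0..m} t"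
  shows "\<exists>y. scalar_mixed_comp m d y = t \<and> series_over {0..m} y"
proof -
  define rest where "rest y w = (\<Sum>\<eta>\<in>shorter_words m w. y \<eta> * phi d \<eta> one_series w)"
    for y w
  define F where "F y w = (if set w \<subseteq> {0..m} then (t w - rest y w) / diag_coeff d w else 0)"
    for y w
  have "\<exists>y. y = F y"
  proof (rule length_local_fixpoint)
    fix g g' :: series and w :: "nat list"
    assume "\<And>u. length u < length w \<Longrightarrow> g u = g' u"
    then have "rest g w = rest g' w"
      unfolding rest_def by (intro sum.cong) (simp_all add: shorter_words_def)
    then show "F g w = F g' w" by (simp add: F_def)
  qed
  then obtain y where "y = F y" by blast
  then have y: "y w = F y w" for w by simp
  have "scalar_mixed_comp m d y w = t w" for w
  proof (cases "set w \<subseteq> {0..m}")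
    case True
    moreover have "diag_coeff d w \<noteq> 0"
      using d diag_coeff_nonzero[OF _ True] by (simp add: pi_series_def)
    ultimately show ?thesis
      using y[of w] by (simp add: scalar_mixed_comp_triangular F_def rest_def)
  next
    case False
    then show ?thesis
      using d t series_over_scalar_mixed_comp[of m d y] by (simp add: pi_series_def series_over_def)
  qed
  moreover have "series_over {0..m} y"
    using y by (simp add: series_over_def F_def)
  ultimately show ?thesis by auto
qed

lemma component_left_inverse_exists:
  assumes x: "x \<in> pi_series m" and i: "i \<in> {1..m}"
  shows "\<exists>y. series_over {0..m} y \<and> y [] \<noteq> 0 \<and> x i \<bowtie> scalar_mixed_comp m x y = one_series"
proof -
  have "x i [] \<noteq> 0" "series_over {0..m} (x i)"
    using x i by (simp_all add: pi_series_def purely_improper_def wf_vseries_iff)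
  then obtain t where t: "x i \<bowtie> t = one_series" "series_over {0..m} t"
    using shuffle_prod_inverse_exists by blast
  obtain y where y: "scalar_mixed_comp m x y = t" "series_over {0..m} y"
    using scalar_mixed_comp_surj[OF x t(2)] by blast
  have "x i [] * y [] = 1"
    using fun_cong[OF t(1), of "[]"] y(1) by (auto simp: one_series_def)
  then have "y [] \<noteq> 0" by auto
  with t y show ?thesis by auto
qed

lemma mult_comp_left_inverse_exists:
  assumes x: "x \<in> pi_series m"
  shows "\<exists>y\<in>pi_series m. mult_comp m y x = one_vseries m"
proof -
  obtain Y where Y: "\<And>i. i \<in> {1..m} \<Longrightarrow> series_over {0..m} (Y i) \<and> Y i [] \<noteq> 0
      \<and> x i \<bowtie> scalar_mixed_comp m x (Y i) = one_series"
    using component_left_inverse_exists[OF x] by metis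
  define y where "y i = (if i \<in> {1..m} then Y i else (\<lambda>_. 0))" for i
  have "y \<in> pi_series m"
    using Y by (auto simp: pi_series_def wf_vseries_iff purely_improper_def y_def)
  moreover have "mult_comp m y x = one_vseries m"
  proof (rule vseries_eqI)
    show "wf_vseries m (mult_comp m y x)"
      using x by (simp add: pi_series_def wf_mult_comp)
    fix i assume "i \<in> {1..m}"
    then show "mult_comp m y x i = one_vseries m i"
      using Y by (simp add: mult_comp_eq_scalar one_vseries_apply y_def)
  qed (rule wf_one_vseries)
  ultimately show ?thesis by blast
qed

theorem theorem8:
  fixes m :: nat
  shows "group (delta_group m) \<and> \<one>\<^bsub>delta_group m\<^esub> = one_vseries m"
proof
  have wf: "x \<in> pi_series m \<Longrightarrow> wf_vseries m x" for x
    by (simp add: pi_series_def)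
  have "monoid (delta_group m)"
    by (rule monoidI)
      (simp_all add: delta_group_def mult_comp_closed one_vseries_pi_series mult_comp_assoc
        mult_comp_one_left mult_comp_one_right wf)
  then show "group (delta_group m)"
    by (rule monoid.group_l_invI) (simp add: delta_group_def mult_comp_left_inverse_exists)
  show "\<one>\<^bsub>delta_group m\<^esub> = one_vseries m"
    by (simp add: delta_group_def)
qed

end
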